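(* Let $(X,d)$ be a compact metric space and let $f_1,f_2:X\to X$ be continuous. Suppose there is a point $c\in X$ with $f_1(x)=c$ for all $x\in X$. If the multiple mapping $F=\{f_1,f_2\}$ is (Hausdorff metric) sensitive, then $f_2$ is sensitive.
   Context: For the multiple mapping $F=\{f_1,f_2\}$ and $n\ge 1$, $F^n(x)=\{f_{i_1}f_{i_2}\cdots f_{i_n}(x)\mid i_1,\dots,i_n\in\{1,2\}\}$, a nonempty compact subset of $X$. The Hausdorff metric on nonempty compact subsets is $d_H(A,B)=\max\{\sup_{a\in A}\inf_{b\in B}d(a,b),\sup_{b\in B}\inf_{a\in A}d(a,b)\}$. $F$ is (Hausdorff metric) sensitive if there is $\delta>0$ such that for every nonempty open $U\subset X$ there exist $x,y\in U$ and $n\in\mathbb{Z}^+$ with $d_H(F^n(x),F^n(y))>\delta$. A continuous map $f:X\to X$ is sensitive if there is $\delta>0$ such that for every nonempty open $U\subset X$ there exist $x,y\in U$ and $n\in\mathbb{Z}^+$ with $d(f^n(x),f^n(y))>\delta$. Here $\mathbb{Z}^+=\{1,2,3,\dots\}$. *)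

theory Defs
  imports "HOL-Analysis.Analysis"
begin

definition hausdorff_dist :: "'a::metric_space set \<Rightarrow> 'a set \<Rightarrow> real" where
  "hausdorff_dist A B =
     max (SUP a\<in>A. INF b\<in>B. dist a b) (SUP b\<in>B. INF a\<in>A. dist a b)"

text \<open>Orbit set of the multiple mapping F = {f1, f2}:
  F^n(x) = { f_{i_1} o ... o f_{i_n} (x) | i_1,...,i_n in {1,2} }.\<close>
fun multi_iter :: "('a \<Rightarrow> 'a) \<Rightarrow> ('a \<Rightarrow> 'a) \<Rightarrow> nat \<Rightarrow> 'a \<Rightarrow> 'a set" where
  "multi_iter f1 f2 0 x = {x}"
| "multi_iter f1 f2 (Suc n) x = f1 ` multi_iter f1 f2 n x \<union> f2 ` multi_iter f1 f2 n x"

definition multi_sensitive :: "'a::metric_space set \<Rightarrow> ('a \<Rightarrow> 'a) \<Rightarrow> ('a \<Rightarrow> 'a) \<Rightarrow> bool" where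
  "multi_sensitive X f1 f2 \<longleftrightarrow>
     (\<exists>\<delta>>0. \<forall>U. openin (top_of_set X) U \<and> U \<noteq> {} \<longrightarrow>
        (\<exists>x\<in>U. \<exists>y\<in>U. \<exists>n\<ge>1. hausdorff_dist (multi_iter f1 f2 n x) (multi_iter f1 f2 n y) > \<delta>))"

definition sensitive :: "'a::metric_space set \<Rightarrow> ('a \<Rightarrow> 'a) \<Rightarrow> bool" where
  "sensitive X f \<longleftrightarrow>
     (\<exists>\<delta>>0. \<forall>U. openin (top_of_set X) U \<and> U \<noteq> {} \<longrightarrow>
        (\<exists>x\<in>U. \<exists>y\<in>U. \<exists>n\<ge>1. dist ((f ^^ n) x) ((f ^^ n) y) > \<delta>))"

end

theory Submission
  imports Defs
begin

text \<open>Since \<open>f\<^sub>1\<close> collapses \<open>X\<close> to the point \<open>c\<close>, every word containing \<open>f\<^sub>1\<close> forgets its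
  starting point: \<open>F\<^sup>n(x) = {f\<^sub>2\<^sup>n(x)} \<union> {f\<^sub>2\<^sup>k(c) | k < n}\<close>. Two such sets differ in
  one point only, so their Hausdorff distance is at most \<open>d(f\<^sub>2\<^sup>n(x), f\<^sub>2\<^sup>n(y))\<close>, and any
  sensitivity constant of \<open>F\<close> is one for \<open>f\<^sub>2\<close>.\<close>

lemma multi_iter_subset:
  assumes "g ` X \<subseteq> X" "h ` X \<subseteq> X" "x \<in> X"
  shows "multi_iter g h n x \<subseteq> X"
  using assms by (induction n) auto

lemma multi_iter_const_left:
  assumes "h ` X \<subseteq> X" "c \<in> X" "\<And>x. x \<in> X \<Longrightarrow> g x = c" "x \<in> X"
  shows "multi_iter g h n x = insert ((h ^^ n) x) ((\<lambda>k. (h ^^ k) c) ` {..<n})"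
proof (induction n)
  case 0
  show ?case by simp
next
  case (Suc n)
  have "g ` X \<subseteq> X" using assms(2,3) by (simp add: image_subset_iff)
  then have "multi_iter g h n x \<subseteq> X"
    using assms(1,4) by (rule multi_iter_subset)
  moreover have "multi_iter g h n x \<noteq> {}" using Suc.IH by blast
  ultimately have "g ` multi_iter g h n x = {c}" using assms(3) by auto
  moreover have "h ` multi_iter g h n x = insert ((h ^^ Suc n) x) ((\<lambda>k. (h ^^ Suc k) c) ` {..<n})"
    unfolding Suc.IH by (simp add: image_image)
  moreover have "(\<lambda>k. (h ^^ k) c) ` {..<Suc n} = insert c ((\<lambda>k. (h ^^ Suc k) c) ` {..<n})"
    unfolding lessThan_Suc_eq_insert_0 image_insert image_image by simp
  ultimately show ?case by simp
qed

lemma SUP_INF_dist_le: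
  fixes A B :: "'a::metric_space set"
  assumes "A \<noteq> {}" and "\<And>a. a \<in> A \<Longrightarrow> \<exists>b\<in>B. dist a b \<le> r"
  shows "(SUP a\<in>A. INF b\<in>B. dist a b) \<le> r"
proof (rule cSUP_least[OF assms(1)])
  fix a assume "a \<in> A"
  then obtain b where "b \<in> B" "dist a b \<le> r" using assms(2) by blast
  moreover have "bdd_below ((\<lambda>b. dist a b) ` B)" by (rule bdd_belowI2[of _ 0]) simp
  ultimately show "(INF b\<in>B. dist a b) \<le> r" by (blast intro: cINF_lower2)
qed

lemma hausdorff_dist_le:
  fixes A B :: "'a::metric_space set"
  assumes "A \<noteq> {}" "B \<noteq> {}"
    and "\<And>a. a \<in> A \<Longrightarrow> \<exists>b\<in>B. dist a b \<le> r"
    and "\<And>b. b \<in> B \<Longrightarrow> \<exists>a\<in>A. dist a b \<le> r"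
  shows "hausdorff_dist A B \<le> r"
proof -
  have "(SUP a\<in>A. INF b\<in>B. dist a b) \<le> r"
    using assms(1,3) by (rule SUP_INF_dist_le)
  moreover have "(SUP b\<in>B. INF a\<in>A. dist b a) \<le> r"
    by (rule SUP_INF_dist_le[OF assms(2)]) (metis assms(4) dist_commute)
  ultimately show ?thesis unfolding hausdorff_dist_def by (simp add: dist_commute)
qed

lemma hausdorff_dist_insert_le:
  fixes a b :: "'a::metric_space"
  shows "hausdorff_dist (insert a S) (insert b S) \<le> dist a b"
proof (rule hausdorff_dist_le)
  show "\<exists>b'\<in>insert b S. dist a' b' \<le> dist a b" if "a' \<in> insert a S" for a'
    using that by (metis dist_self insertCI insertE order_refl zero_le_dist)
  show "\<exists>a'\<in>insert a S. dist a' b' \<le> dist a b" if "b' \<in> insert b S" for b'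
    using that by (metis dist_self insertCI insertE order_refl zero_le_dist dist_commute)
qed simp_all

lemma hausdorff_dist_multi_iter_const_left_le:
  fixes g h :: "'a::metric_space \<Rightarrow> 'a"
  assumes "h ` X \<subseteq> X" "c \<in> X" "\<And>x. x \<in> X \<Longrightarrow> g x = c" "x \<in> X" "y \<in> X"
  shows "hausdorff_dist (multi_iter g h n x) (multi_iter g h n y) \<le> dist ((h ^^ n) x) ((h ^^ n) y)"
  using hausdorff_dist_insert_le
  by (simp only: multi_iter_const_left[OF assms(1-4)] multi_iter_const_left[OF assms(1-3,5)])

theorem theorem3p2:
  fixes X :: "'a::metric_space set" and f1 f2 :: "'a \<Rightarrow> 'a" and c :: 'a
  assumes "compact X"
    and "continuous_on X f1" and "f1 ` X \<subseteq> X"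
    and "continuous_on X f2" and "f2 ` X \<subseteq> X"
    and "c \<in> X" and "\<And>x. x \<in> X \<Longrightarrow> f1 x = c"
    and "multi_sensitive X f1 f2"
  shows "sensitive X f2"
proof -
  obtain \<delta> where "\<delta> > 0" and sens: "\<forall>U. openin (top_of_set X) U \<and> U \<noteq> {} \<longrightarrow>
      (\<exists>x\<in>U. \<exists>y\<in>U. \<exists>n\<ge>1. hausdorff_dist (multi_iter f1 f2 n x) (multi_iter f1 f2 n y) > \<delta>)"
    using assms(8) unfolding multi_sensitive_def by blast
  show ?thesis unfolding sensitive_def
  proof (intro exI[of _ \<delta>] conjI allI impI \<open>\<delta> > 0\<close>)
    fix U assume U: "openin (top_of_set X) U \<and> U \<noteq> {}"
    then obtain x y n where "x \<in> U" "y \<in> U" "n \<ge> 1"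
      and "hausdorff_dist (multi_iter f1 f2 n x) (multi_iter f1 f2 n y) > \<delta>"
      using sens by blast
    moreover have "U \<subseteq> X" using U openin_imp_subset by blast
    ultimately show "\<exists>x\<in>U. \<exists>y\<in>U. \<exists>n\<ge>1. dist ((f2 ^^ n) x) ((f2 ^^ n) y) > \<delta>"
      using hausdorff_dist_multi_iter_const_left_le[OF assms(5-7)]
      by (meson less_le_trans subsetD)
  qed
qed

end
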